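(* $C_{AD}(3,6)=\log_2 27$.
   Context: There are $n$ nodes labeled $1,\dots,n$ (here $n=3$); node $i$ privately holds an input $x_i\in\{1,\dots,M\}$ (here $M=6$). Communication is over private point-to-point links of a fully connected synchronous network. A deterministic protocol $P$ is a fixed finite schedule of steps $l=1,\dots,L(P)$; in step $l$ a prescribed node $T_l$ sends to a prescribed node $R_l\neq T_l$ one symbol $f_l(x_{T_l},T_l^+(l))$, where $T_l^+(l)$ is the sequence of symbols $T_l$ has received in steps $1,\dots,l-1$; only $R_l$ receives it. Its complexity is $C(P)=\sum_{l}\log_2 S_l(P)$, with $S_l(P)$ the number of distinct values of the step-$l$ symbol over all inputs in $\{1,\dots,M\}^n$. At the end each node $i$ outputs a bit $EQ_i$ depending on $x_i$ and the symbols it received. $P$ solves MEQ-AD$(n,M)$ if for every input, $EQ_1=\cdots=EQ_n=0$ iff $x_1=\cdots=x_n$. $C_{AD}(n,M)$ is the infimum of $C(P)$ over protocols solving MEQ-AD$(n,M)$. *)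

theory Defs
  imports Complex_Main "HOL-Library.FuncSet"
begin

text \<open>Symbols are natural numbers
  (any finite symbol alphabet can be encoded injectively into nat).
  A step is (T, R, f): node T sends f (x_T) (symbols T received so far) to R.\<close>

type_synonym step = "nat \<times> nat \<times> (nat \<Rightarrow> nat list \<Rightarrow> nat)"

record protocol =
  steps :: "step list"
  eq_out :: "nat \<Rightarrow> nat \<Rightarrow> nat list \<Rightarrow> bool"  \<comment> \<open>EQ_i = output i x_i received_i; True means 1\<close>

definition inputs :: "nat \<Rightarrow> nat \<Rightarrow> (nat \<Rightarrow> nat) set" where
  "inputs n M = {1..n} \<rightarrow>\<^sub>E {1..M}"

definition received :: "nat \<Rightarrow> (nat \<times> nat) list \<Rightarrow> nat list" where
  "received i h = map snd (filter (\<lambda>p. fst p = i) h)"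

fun run :: "step list \<Rightarrow> (nat \<Rightarrow> nat) \<Rightarrow> (nat \<times> nat) list \<Rightarrow> (nat \<times> nat) list" where
  "run [] x h = h"
| "run ((T, R, f) # rest) x h = run rest x (h @ [(R, f (x T) (received T h))])"

definition history :: "protocol \<Rightarrow> (nat \<Rightarrow> nat) \<Rightarrow> (nat \<times> nat) list" where
  "history P x = run (steps P) x []"

definition sym_at :: "protocol \<Rightarrow> (nat \<Rightarrow> nat) \<Rightarrow> nat \<Rightarrow> nat" where
  "sym_at P x l = snd (history P x ! l)"

definition well_formed :: "nat \<Rightarrow> protocol \<Rightarrow> bool" where
  "well_formed n P \<longleftrightarrow> (\<forall>(T, R, f) \<in> set (steps P). T \<in> {1..n} \<and> R \<in> {1..n} \<and> T \<noteq> R)"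

definition complexity :: "nat \<Rightarrow> nat \<Rightarrow> protocol \<Rightarrow> real" where
  "complexity n M P =
     (\<Sum>l<length (steps P). log 2 (real (card ((\<lambda>x. sym_at P x l) ` inputs n M))))"

definition solves_MEQ_AD :: "nat \<Rightarrow> nat \<Rightarrow> protocol \<Rightarrow> bool" where
  "solves_MEQ_AD n M P \<longleftrightarrow> well_formed n P \<and>
     (\<forall>x \<in> inputs n M.
        (\<forall>i \<in> {1..n}. \<not> eq_out P i (x i) (received i (history P x)))
        \<longleftrightarrow> (\<forall>i \<in> {1..n}. \<forall>j \<in> {1..n}. x i = x j))"

definition C_AD :: "nat \<Rightarrow> nat \<Rightarrow> real" where
  "C_AD n M = Inf (complexity n M ` {P. solves_MEQ_AD n M P})"

end

theory Submission
  imports Defs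
begin

text \<open>Lower bound: a fooling-set argument on the constant inputs. If two constant inputs
  produced the same symbols on all steps at node i, the input in which i holds one value and
  all other nodes the other would look accepted to every node. So the product of the alphabet
  sizes over the steps at each node is at least 6: writing p, q, r for these products over the
  three links, pq, pr, qr \<ge> 6. If moreover pq = 6, the six constant inputs realise every
  possible transcript at node 1, and gluing three constant runs shows that link 2--3 alone must
  separate them, so r \<ge> 6. These constraints force pqr \<ge> 27. Upper bound: a ring protocol
  1 \<rightarrow> 2 \<rightarrow> 3 \<rightarrow> 1 with ternary messages.\<close>

definition sender :: "protocol \<Rightarrow> nat \<Rightarrow> nat" where
  "sender P l = fst (steps P ! l)"

definition receiver :: "protocol \<Rightarrow> nat \<Rightarrow> nat" where
  "receiver P l = fst (snd (steps P ! l))"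

definition message :: "protocol \<Rightarrow> nat \<Rightarrow> nat \<Rightarrow> nat list \<Rightarrow> nat" where
  "message P l = snd (snd (steps P ! l))"

definition inbox :: "protocol \<Rightarrow> nat \<Rightarrow> nat \<Rightarrow> nat list" where
  "inbox P i l = filter (\<lambda>m. receiver P m = i) [0..<l]"

lemma length_run: "length (run ss x h) = length h + length ss"
  by (induction ss x h rule: run.induct) auto

lemma run_append: "run (ss @ ts) x h = run ts x (run ss x h)"
  by (induction ss x h rule: run.induct) auto

lemma take_run: "take (length h) (run ss x h) = h"
proof (induction ss x h rule: run.induct)
  case (2 T R f rest x h)
  then have "take (length h) (take (Suc (length h)) (run rest x (h @ [(R, f (x T) (received T h))]))) = h"
    by simp
  then show ?case by simp
qed simp

lemma length_history: "length (history P x) = length (steps P)"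
  by (simp add: history_def length_run)

lemma history_nth:
  assumes "l < length (steps P)"
  shows "history P x ! l =
    (receiver P l, message P l (x (sender P l)) (received (sender P l) (take l (history P x))))"
proof -
  obtain T R f where st: "steps P ! l = (T, R, f)" by (cases "steps P ! l") auto
  define h where "h = run (take l (steps P)) x []"
  define h' where "h' = h @ [(R, f (x T) (received T h))]"
  have len_h: "length h = l" using assms by (simp add: h_def length_run)
  have "steps P = take l (steps P) @ (T, R, f) # drop (Suc l) (steps P)"
    using id_take_nth_drop[OF assms] st by simp
  then have "history P x = run (take l (steps P) @ (T, R, f) # drop (Suc l) (steps P)) x []"
    unfolding history_def by (rule arg_cong)
  also have "\<dots> = run (drop (Suc l) (steps P)) x h'"
    unfolding h'_def h_def by (simp add: run_append)
  finally have prefix: "take (Suc l) (history P x) = h'"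
    using take_run[of h'] by (simp add: h'_def len_h)
  have "take l (history P x) = h"
    using take_take[of l "Suc l" "history P x"] by (simp add: prefix h'_def len_h)
  moreover have "history P x ! l = h' ! l"
    using nth_take[of l "Suc l" "history P x"] by (simp add: prefix)
  ultimately show ?thesis by (simp add: st sender_def receiver_def message_def h'_def nth_append len_h)
qed

lemma history_eq_map:
  "history P x = map (\<lambda>l. (receiver P l, sym_at P x l)) [0..<length (steps P)]"
  by (rule nth_equalityI) (simp_all add: length_history history_nth sym_at_def)

lemma received_take_history:
  assumes "l \<le> length (steps P)"
  shows "received i (take l (history P x)) = map (sym_at P x) (inbox P i l)"
  using assms by (simp add: history_eq_map received_def inbox_def take_map filter_map comp_def)

lemma sym_at_rec:
  assumes "l < length (steps P)"
  shows "sym_at P x l = message P l (x (sender P l)) (map (sym_at P x) (inbox P (sender P l) l))"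
  using assms history_nth[OF assms, of x] received_take_history[of l P "sender P l" x]
  by (simp add: sym_at_def)

lemma received_history:
  "received i (history P x) = map (sym_at P x) (inbox P i (length (steps P)))"
  using received_take_history[of "length (steps P)" P i x] by (simp add: length_history)

lemma sym_at_unique:
  assumes "\<And>l. l < length (steps P) \<Longrightarrow>
    \<sigma> l = message P l (x (sender P l)) (map \<sigma> (inbox P (sender P l) l))"
  shows "l < length (steps P) \<Longrightarrow> \<sigma> l = sym_at P x l"
proof (induction l rule: less_induct)
  case (less l)
  have "map \<sigma> (inbox P (sender P l) l) = map (sym_at P x) (inbox P (sender P l) l)"
    using less by (auto simp: inbox_def)
  then show ?case using assms[OF less.prems] sym_at_rec[OF less.prems, of x] by (simp del: map_eq_conv)
qed

lemma well_formed_nth: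
  assumes "well_formed n P" "l < length (steps P)"
  shows "sender P l \<in> {1..n}" "receiver P l \<in> {1..n}" "sender P l \<noteq> receiver P l"
proof -
  obtain T R f where st: "steps P ! l = (T, R, f)" by (cases "steps P ! l") auto
  then have "(T, R, f) \<in> set (steps P)" using nth_mem[OF assms(2)] by metis
  then have "T \<in> {1..n} \<and> R \<in> {1..n} \<and> T \<noteq> R"
    using assms(1) unfolding well_formed_def by (auto dest!: bspec)
  then show "sender P l \<in> {1..n}" "receiver P l \<in> {1..n}" "sender P l \<noteq> receiver P l"
    using st by (simp_all add: sender_def receiver_def)
qed

section \<open>Gluing runs along links\<close>

text \<open>A node's view depends only on its own input and the symbols on its links, so runs
  that agree on every link can be glued: each step is read off its sender's run.\<close>

context
  fixes n :: nat and P :: protocol and Y :: "nat \<Rightarrow> nat \<Rightarrow> nat" and x :: "nat \<Rightarrow> nat"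
  assumes wf: "well_formed n P"
    and agree: "\<And>l. l < length (steps P) \<Longrightarrow>
      sym_at P (Y (sender P l)) l = sym_at P (Y (receiver P l)) l"
    and x_eq: "\<And>m. m \<in> {1..n} \<Longrightarrow> x m = Y m m"
begin

lemma sym_at_paste:
  assumes "l < length (steps P)"
  shows "sym_at P x l = sym_at P (Y (sender P l)) l"
proof (rule sym_at_unique[symmetric, OF _ assms])
  fix l assume l: "l < length (steps P)"
  define T where "T = sender P l"
  have "map (sym_at P (Y T)) (inbox P T l) = map (\<lambda>m. sym_at P (Y (sender P m)) m) (inbox P T l)"
    using agree l by (auto simp: inbox_def)
  moreover have "Y T T = x T" using x_eq well_formed_nth(1)[OF wf l] by (simp add: T_def)
  ultimately show "sym_at P (Y (sender P l)) l =
      message P l (x (sender P l)) (map (\<lambda>m. sym_at P (Y (sender P m)) m) (inbox P (sender P l) l))"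
    using sym_at_rec[OF l, of "Y T"] by (simp add: T_def del: map_eq_conv)
qed

lemma received_paste:
  assumes "m \<in> {1..n}"
  shows "received m (history P x) = received m (history P (Y m))"
  unfolding received_history inbox_def using sym_at_paste agree by (auto intro!: map_cong)

end

definition const_input :: "nat \<Rightarrow> nat \<Rightarrow> nat \<Rightarrow> nat" where
  "const_input n d = restrict (\<lambda>_. d) {1..n}"

lemma const_input_in_inputs: "d \<in> {1..M} \<Longrightarrow> const_input n d \<in> inputs n M"
  by (simp add: const_input_def inputs_def restrict_PiE_iff)

lemma fooling_set:
  assumes sol: "solves_MEQ_AD n M P"
    and c: "\<And>m. m \<in> {1..n} \<Longrightarrow> c m \<in> {1..M}"
    and links: "\<And>l. l < length (steps P) \<Longrightarrow>
      sym_at P (const_input n (c (sender P l))) l = sym_at P (const_input n (c (receiver P l))) l"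
    and i: "i \<in> {1..n}" and j: "j \<in> {1..n}"
  shows "c i = c j"
proof -
  define x where "x = restrict c {1..n}"
  have wf: "well_formed n P" and
    accept: "\<And>z. z \<in> inputs n M \<Longrightarrow>
      (\<forall>i\<in>{1..n}. \<not> eq_out P i (z i) (received i (history P z)))
        \<longleftrightarrow> (\<forall>i\<in>{1..n}. \<forall>j\<in>{1..n}. z i = z j)"
    using sol by (auto simp: solves_MEQ_AD_def)
  have x_eq: "\<And>m. m \<in> {1..n} \<Longrightarrow> x m = const_input n (c m) m"
    by (simp add: x_def const_input_def)
  have "\<not> eq_out P m (x m) (received m (history P x))" if m: "m \<in> {1..n}" for m
  proof -
    have "\<not> eq_out P m (const_input n (c m) m) (received m (history P (const_input n (c m))))"
      using accept[OF const_input_in_inputs[OF c[OF m]]] m by (simp add: const_input_def)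
    then show ?thesis using received_paste[OF wf links x_eq m] x_eq[OF m] by simp
  qed
  moreover have "x \<in> inputs n M" using c by (simp add: x_def inputs_def restrict_PiE_iff)
  ultimately have "x i = x j" using accept i j by blast
  then show ?thesis using i j by (simp add: x_def)
qed

section \<open>Counting transcripts\<close>

definition alphabet :: "nat \<Rightarrow> nat \<Rightarrow> protocol \<Rightarrow> nat \<Rightarrow> nat set" where
  "alphabet n M P l = (\<lambda>x. sym_at P x l) ` inputs n M"

definition capacity :: "nat \<Rightarrow> nat \<Rightarrow> protocol \<Rightarrow> nat set \<Rightarrow> nat" where
  "capacity n M P I = (\<Prod>l\<in>I. card (alphabet n M P l))"

definition transcript :: "protocol \<Rightarrow> nat set \<Rightarrow> (nat \<Rightarrow> nat) \<Rightarrow> nat \<Rightarrow> nat" where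
  "transcript P I x = restrict (sym_at P x) I"

lemma finite_inputs: "finite (inputs n M)"
  unfolding inputs_def by (rule finite_PiE) auto

lemma finite_alphabet: "finite (alphabet n M P l)"
  unfolding alphabet_def using finite_inputs by simp

lemma transcript_in_PiE: "x \<in> inputs n M \<Longrightarrow> transcript P I x \<in> PiE I (alphabet n M P)"
  unfolding transcript_def alphabet_def by (auto simp: restrict_PiE_iff)

lemma card_PiE_alphabet: "finite I \<Longrightarrow> card (PiE I (alphabet n M P)) = capacity n M P I"
  unfolding capacity_def by (rule card_PiE)

lemma transcript_eqD:
  "transcript P I x = transcript P I y \<Longrightarrow> l \<in> I \<Longrightarrow> sym_at P x l = sym_at P y l"
  unfolding transcript_def by (metis restrict_apply')

lemma capacity_union:
  "finite I \<Longrightarrow> finite J \<Longrightarrow> I \<inter> J = {} \<Longrightarrow>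
    capacity n M P (I \<union> J) = capacity n M P I * capacity n M P J"
  unfolding capacity_def by (rule prod.union_disjoint)

lemma capacity_ge_of_inj:
  assumes "finite I" and inj: "inj_on (\<lambda>d. transcript P I (const_input n d)) {1..M}"
  shows "M \<le> capacity n M P I"
proof -
  have "(\<lambda>d. transcript P I (const_input n d)) ` {1..M} \<subseteq> PiE I (alphabet n M P)"
    using transcript_in_PiE const_input_in_inputs by blast
  then have "card ((\<lambda>d. transcript P I (const_input n d)) ` {1..M}) \<le> card (PiE I (alphabet n M P))"
    using assms(1) finite_alphabet by (intro card_mono) (auto intro: finite_PiE)
  then show ?thesis using card_image[OF inj] card_PiE_alphabet[OF assms(1)] by simp
qed

definition incident :: "protocol \<Rightarrow> nat \<Rightarrow> nat set" where
  "incident P i = {l. l < length (steps P) \<and> (sender P l = i \<or> receiver P l = i)}"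

definition link :: "protocol \<Rightarrow> nat \<Rightarrow> nat \<Rightarrow> nat set" where
  "link P i j = {l. l < length (steps P) \<and> {sender P l, receiver P l} = {i, j}}"

lemma finite_incident: "finite (incident P i)"
  unfolding incident_def by simp

lemma finite_link: "finite (link P i j)"
  unfolding link_def by simp

lemma link_commute: "link P i j = link P j i"
  unfolding link_def by (auto simp: insert_commute)

lemma link_disjoint: "j \<noteq> k \<Longrightarrow> link P i j \<inter> link P i k = {}"
  unfolding link_def by (auto simp: doubleton_eq_iff)

lemma inj_transcript_incident:
  assumes sol: "solves_MEQ_AD n M P" and i: "i \<in> {1..n}" and j: "j \<in> {1..n}" "j \<noteq> i"
  shows "inj_on (\<lambda>d. transcript P (incident P i) (const_input n d)) {1..M}"
proof (rule inj_onI)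
  fix d d' assume d: "d \<in> {1..M}" and d': "d' \<in> {1..M}"
    and eq: "transcript P (incident P i) (const_input n d) = transcript P (incident P i) (const_input n d')"
  define c where "c m = (if m = i then d else d')" for m
  have "c i = c j"
  proof (rule fooling_set[OF sol _ _ i j(1)])
    show "c m \<in> {1..M}" for m using d d' by (simp add: c_def)
    fix l assume "l < length (steps P)"
    then show "sym_at P (const_input n (c (sender P l))) l = sym_at P (const_input n (c (receiver P l))) l"
      using transcript_eqD[OF eq, of l] by (auto simp: c_def incident_def)
  qed
  then show "d = d'" using j(2) by (simp add: c_def)
qed

lemma capacity_incident_ge:
  assumes "solves_MEQ_AD n M P" "i \<in> {1..n}" "j \<in> {1..n}" "j \<noteq> i"
  shows "M \<le> capacity n M P (incident P i)"
  using capacity_ge_of_inj[OF finite_incident inj_transcript_incident[OF assms]] .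

lemma link_cover:
  assumes "well_formed 3 P" "l < length (steps P)"
    and "i \<in> {1..3}" "j \<in> {1..3}" "k \<in> {1..3}" "i \<noteq> j" "i \<noteq> k" "j \<noteq> k"
  shows "l \<in> link P i j \<union> link P i k \<union> link P j k"
proof -
  have nodes: "{1..3::nat} = {i, j, k}" using assms(3-8) by auto
  have s: "sender P l \<in> {i, j, k}" and r: "receiver P l \<in> {i, j, k}"
    and sr: "sender P l \<noteq> receiver P l"
    using well_formed_nth[OF assms(1,2)] unfolding nodes by simp_all
  from s r sr have "{sender P l, receiver P l} \<in> {{i, j}, {i, k}, {j, k}}"
    by (elim insertE emptyE) (simp_all add: insert_commute)
  then show ?thesis using assms(2) unfolding link_def by blast
qed

lemma incident_eq_link_union:
  assumes "well_formed 3 P"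
    and "i \<in> {1..3}" "j \<in> {1..3}" "k \<in> {1..3}" "i \<noteq> j" "i \<noteq> k" "j \<noteq> k"
  shows "incident P i = link P i j \<union> link P i k"
proof
  show "incident P i \<subseteq> link P i j \<union> link P i k"
  proof
    fix l assume l: "l \<in> incident P i"
    then have "l \<notin> link P j k" using assms(5,6) by (auto simp: incident_def link_def doubleton_eq_iff)
    then show "l \<in> link P i j \<union> link P i k" using link_cover[OF assms(1) _ assms(2-)] l
      by (auto simp: incident_def)
  qed
qed (auto simp: incident_def link_def doubleton_eq_iff)

lemma steps_eq_link_union:
  assumes "well_formed 3 P"
  shows "{..<length (steps P)} = link P 1 2 \<union> link P 1 3 \<union> link P 2 3"
  using link_cover[OF assms, of _ 1 2 3] by (auto simp: link_def)

lemma link_sym_at_agree: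
  assumes "l \<in> link P a b" "sym_at P (Z a) l = sym_at P (Z b) l"
  shows "sym_at P (Z (sender P l)) l = sym_at P (Z (receiver P l)) l"
  using assms by (auto simp: link_def doubleton_eq_iff)

text \<open>If the constant inputs exhaust all transcripts at node i, some constant input e
  reproduces the symbols of d on link i--j and those of d' on link i--k; the input with
  values e, d, d' at i, j, k then fools the protocol unless link j--k separates d from d'.\<close>

lemma inj_transcript_link:
  assumes sol: "solves_MEQ_AD 3 M P"
    and i: "i \<in> {1..3}" and j: "j \<in> {1..3}" and k: "k \<in> {1..3}"
    and ij: "i \<noteq> j" and ik: "i \<noteq> k" and jk: "j \<noteq> k"
    and tight: "capacity 3 M P (incident P i) = M"
  shows "inj_on (\<lambda>d. transcript P (link P j k) (const_input 3 d)) {1..M}"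
proof (rule inj_onI)
  fix d d' assume d: "d \<in> {1..M}" and d': "d' \<in> {1..M}"
    and eq: "transcript P (link P j k) (const_input 3 d) = transcript P (link P j k) (const_input 3 d')"
  have wf: "well_formed 3 P" using sol by (simp add: solves_MEQ_AD_def)
  let ?t = "\<lambda>e. transcript P (incident P i) (const_input 3 e)"
  have onto: "?t ` {1..M} = PiE (incident P i) (alphabet 3 M P)"
  proof (rule card_subset_eq)
    show "finite (PiE (incident P i) (alphabet 3 M P))"
      using finite_incident finite_alphabet by (intro finite_PiE) auto
    show "?t ` {1..M} \<subseteq> PiE (incident P i) (alphabet 3 M P)"
      using transcript_in_PiE const_input_in_inputs by blast
    show "card (?t ` {1..M}) = card (PiE (incident P i) (alphabet 3 M P))"
      using card_image[OF inj_transcript_incident[OF sol i j ij[symmetric]]]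
        card_PiE_alphabet[OF finite_incident] tight by simp
  qed
  define g where
    "g = restrict (\<lambda>l. sym_at P (const_input 3 (if l \<in> link P i j then d else d')) l) (incident P i)"
  have "g \<in> PiE (incident P i) (alphabet 3 M P)"
    using const_input_in_inputs[OF d] const_input_in_inputs[OF d']
    by (auto simp: g_def alphabet_def restrict_PiE_iff)
  then have "g \<in> ?t ` {1..M}" using onto by simp
  then obtain e where e: "e \<in> {1..M}" and te: "?t e = g" by blast
  have link_incident: "link P i j \<union> link P i k \<subseteq> incident P i"
    by (auto simp: link_def incident_def doubleton_eq_iff)
  have e_ij: "sym_at P (const_input 3 e) l = sym_at P (const_input 3 d) l" if "l \<in> link P i j" for l
    using fun_cong[OF te, of l] that link_incident by (auto simp: transcript_def g_def)
  have e_ik: "sym_at P (const_input 3 e) l = sym_at P (const_input 3 d') l" if "l \<in> link P i k" for l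
  proof -
    have "l \<in> incident P i" "l \<notin> link P i j"
      using that link_incident link_disjoint[OF jk, of P i] by blast+
    then show ?thesis using fun_cong[OF te, of l] by (simp add: transcript_def g_def)
  qed
  define c where "c m = (if m = i then e else if m = j then d else d')" for m
  have "c j = c k"
  proof (rule fooling_set[OF sol _ _ j k])
    show "c m \<in> {1..M}" for m using d d' e by (simp add: c_def)
    fix l assume l: "l < length (steps P)"
    let ?Z = "\<lambda>m. const_input 3 (c m)"
    consider "l \<in> link P i j" | "l \<in> link P i k" | "l \<in> link P j k"
      using link_cover[OF wf l i j k ij ik jk] by blast
    then show "sym_at P (?Z (sender P l)) l = sym_at P (?Z (receiver P l)) l"
    proof cases
      case 1 then show ?thesis using e_ij ij by (intro link_sym_at_agree[of l P i j ?Z]) (simp_all add: c_def)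
    next
      case 2 then show ?thesis using e_ik ij ik jk by (intro link_sym_at_agree[of l P i k ?Z]) (simp_all add: c_def)
    next
      case 3 then show ?thesis using transcript_eqD[OF eq] ij ik jk
        by (intro link_sym_at_agree[of l P j k ?Z]) (simp_all add: c_def)
    qed
  qed
  then show "d = d'" using ij ik jk by (simp add: c_def)
qed

lemma capacity_link_bounds:
  assumes sol: "solves_MEQ_AD 3 M P"
    and i: "i \<in> {1..3}" and j: "j \<in> {1..3}" and k: "k \<in> {1..3}"
    and ij: "i \<noteq> j" and ik: "i \<noteq> k" and jk: "j \<noteq> k"
  shows "M \<le> capacity 3 M P (link P i j) * capacity 3 M P (link P i k)"
    and "capacity 3 M P (link P i j) * capacity 3 M P (link P i k) = M \<Longrightarrow>
      M \<le> capacity 3 M P (link P j k)"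
proof -
  have wf: "well_formed 3 P" using sol by (simp add: solves_MEQ_AD_def)
  have split: "capacity 3 M P (incident P i) = capacity 3 M P (link P i j) * capacity 3 M P (link P i k)"
    using incident_eq_link_union[OF wf i j k ij ik jk] link_disjoint[OF jk]
    by (simp add: capacity_union finite_link)
  show "M \<le> capacity 3 M P (link P i j) * capacity 3 M P (link P i k)"
    using capacity_incident_ge[OF sol i j ij[symmetric]] split by simp
  show "M \<le> capacity 3 M P (link P j k)"
    if "capacity 3 M P (link P i j) * capacity 3 M P (link P i k) = M"
    using capacity_ge_of_inj[OF finite_link inj_transcript_link[OF sol i j k ij ik jk]] split that
    by simp
qed

lemma small_factor_bound:
  fixes p q r :: nat
  assumes "7 \<le> p * q" "7 \<le> p * r" "p \<le> 2"
  shows "27 \<le> p * q * r"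
proof -
  consider "p = 1" | "p = 2" using assms by (cases p) (auto simp: le_Suc_eq)
  then show ?thesis
  proof cases
    case 1
    then have "7 * 7 \<le> q * r" using assms by (intro mult_le_mono) auto
    then show ?thesis using 1 by simp
  next
    case 2
    then have "4 * 4 \<le> q * r" using assms by (intro mult_le_mono) auto
    then show ?thesis using 2 by simp
  qed
qed

lemma pairwise_product_bound:
  fixes p q r :: nat
  assumes "6 \<le> p * q" "6 \<le> p * r" "6 \<le> q * r"
    and "p * q = 6 \<Longrightarrow> 6 \<le> r" "p * r = 6 \<Longrightarrow> 6 \<le> q" "q * r = 6 \<Longrightarrow> 6 \<le> p"
  shows "27 \<le> p * q * r"
proof (cases "p * q = 6 \<or> p * r = 6 \<or> q * r = 6")
  case True
  then have "6 * 6 \<le> p * q * r"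
    using assms(4-6) mult_le_mono[of 6 "p * q" 6 r] mult_le_mono[of 6 "p * r" 6 q]
      mult_le_mono[of 6 "q * r" 6 p]
    by (auto simp: ac_simps)
  then show ?thesis by simp
next
  case False
  then have "7 \<le> p * q" "7 \<le> p * r" "7 \<le> q * r" using assms(1-3) by auto
  consider "p \<le> 2" | "q \<le> 2" | "r \<le> 2" | "3 \<le> p" "3 \<le> q" "3 \<le> r" by linarith
  then show ?thesis
  proof cases
    case 1 then show ?thesis using small_factor_bound[of p q r] \<open>7 \<le> p * q\<close> \<open>7 \<le> p * r\<close>
      by simp
  next
    case 2 then show ?thesis using small_factor_bound[of q p r] \<open>7 \<le> p * q\<close> \<open>7 \<le> q * r\<close>
      by (simp add: ac_simps)
  next
    case 3 then show ?thesis using small_factor_bound[of r p q] \<open>7 \<le> p * r\<close> \<open>7 \<le> q * r\<close>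
      by (simp add: ac_simps)
  next
    case 4
    then have "3 * 3 * 3 \<le> p * q * r" by (intro mult_le_mono)
    then show ?thesis by simp
  qed
qed

lemma capacity_ge_27:
  assumes sol: "solves_MEQ_AD 3 6 P"
  shows "27 \<le> capacity 3 6 P {..<length (steps P)}"
proof -
  have wf: "well_formed 3 P" using sol by (simp add: solves_MEQ_AD_def)
  define p where "p = capacity 3 6 P (link P 1 2)"
  define q where "q = capacity 3 6 P (link P 1 3)"
  define r where "r = capacity 3 6 P (link P 2 3)"
  have "capacity 3 6 P {..<length (steps P)} = p * q * r"
  proof -
    have "link P 1 2 \<inter> link P 1 3 = {}" by (rule link_disjoint) simp
    moreover have "(link P 1 2 \<union> link P 1 3) \<inter> link P 2 3 = {}"
      by (auto simp: link_def doubleton_eq_iff)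
    ultimately show ?thesis
      unfolding steps_eq_link_union[OF wf] p_def q_def r_def by (simp add: capacity_union finite_link)
  qed
  moreover note capacity_link_bounds[OF sol, of 1 2 3] capacity_link_bounds[OF sol, of 2 1 3]
    capacity_link_bounds[OF sol, of 3 1 2]
  ultimately show ?thesis
    using pairwise_product_bound[of p q r] link_commute[of P 2 1] link_commute[of P 3 1]
      link_commute[of P 3 2]
    by (simp add: p_def q_def r_def)
qed

lemma complexity_eq_log_capacity:
  assumes "1 \<le> M"
  shows "complexity n M P = log 2 (capacity n M P {..<length (steps P)})"
proof -
  have "const_input n 1 \<in> inputs n M" using assms by (intro const_input_in_inputs) simp
  then have pos: "0 < real (card (alphabet n M P l))" for l
    using finite_alphabet by (auto simp: alphabet_def card_gt_0_iff)
  have "log 2 (capacity n M P {..<length (steps P)})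
      = ln (\<Prod>l<length (steps P). real (card (alphabet n M P l))) / ln 2"
    by (simp add: capacity_def log_def)
  also have "\<dots> = (\<Sum>l<length (steps P). log 2 (real (card (alphabet n M P l))))"
    using pos by (simp add: ln_prod log_def sum_divide_distrib less_imp_neq[symmetric])
  finally show ?thesis by (simp add: complexity_def alphabet_def)
qed

lemma complexity_ge_log_27:
  assumes "solves_MEQ_AD 3 6 P"
  shows "log 2 27 \<le> complexity 3 6 P"
  using capacity_ge_27[OF assms] by (simp add: complexity_eq_log_capacity)

section \<open>A ring protocol with ternary messages\<close>

text \<open>Node 1 sends the class of its input in the partition {3,4}, {2,5}, {1,6}; node 2
  compares it with the class of its own input and forwards a symbol that nodes 3 and 1 check.\<close>

definition msg1 :: "nat list" where
  "msg1 = [2, 1, 0, 0, 1, 2]"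

definition msg2 :: "nat list list" where
  "msg2 = [[0, 2, 0], [0, 1, 1], [2, 1, 1], [0, 0, 0], [2, 2, 2], [1, 2, 1]]"

definition msg3 :: "nat list list" where
  "msg3 = [[1, 1, 2], [0, 0, 1], [2, 2, 2], [0, 0, 0], [1, 1, 1], [2, 2, 2]]"

definition expect1 :: "nat list" where
  "expect1 = [1, 0, 2, 0, 1, 2]"

definition expect3 :: "nat list" where
  "expect3 = [0, 1, 2, 0, 2, 1]"

definition ring_protocol :: protocol where
  "ring_protocol =
    \<lparr>steps = [(1, 2, \<lambda>v _. msg1 ! (v - 1)),
              (2, 3, \<lambda>v r. msg2 ! (v - 1) ! hd r),
              (3, 1, \<lambda>v r. msg3 ! (v - 1) ! hd r)],
     eq_out = (\<lambda>i v r.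
       hd r \<noteq> (if i = 1 then expect1 else if i = 2 then msg1 else expect3) ! (v - 1))\<rparr>"

lemma history_ring_protocol:
  "history ring_protocol x =
    (let a = msg1 ! (x 1 - 1); b = msg2 ! (x 2 - 1) ! a in [(2, a), (3, b), (1, msg3 ! (x 3 - 1) ! b)])"
  by (simp add: history_def ring_protocol_def received_def Let_def)

lemma ring_protocol_table:
  "\<forall>a\<in>{1..6}. \<forall>b\<in>{1..6}. \<forall>c\<in>{1..6}.
    (msg3 ! (c - 1) ! (msg2 ! (b - 1) ! (msg1 ! (a - 1))) = expect1 ! (a - 1) \<and>
     msg1 ! (a - 1) = msg1 ! (b - 1) \<and>
     msg2 ! (b - 1) ! (msg1 ! (a - 1)) = expect3 ! (c - 1)) \<longleftrightarrow> a = b \<and> b = c"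
proof -
  have "{1..6::nat} = {1, 2, 3, 4, 5, 6}" by auto
  then show ?thesis by (simp add: msg1_def msg2_def msg3_def expect1_def expect3_def)
qed

lemma ring_protocol_solves: "solves_MEQ_AD 3 6 ring_protocol"
  unfolding solves_MEQ_AD_def
proof (intro conjI ballI)
  show "well_formed 3 ring_protocol" by (simp add: well_formed_def ring_protocol_def)
  fix x assume "x \<in> inputs 3 6"
  then have x: "x 1 \<in> {1..6}" "x 2 \<in> {1..6}" "x 3 \<in> {1..6}" by (auto simp: inputs_def)
  define a where "a = msg1 ! (x 1 - 1)"
  define b where "b = msg2 ! (x 2 - 1) ! a"
  have outputs: "eq_out ring_protocol 1 (x 1) (received 1 (history ring_protocol x)) \<longleftrightarrow>
      msg3 ! (x 3 - 1) ! b \<noteq> expect1 ! (x 1 - 1)"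
    "eq_out ring_protocol 2 (x 2) (received 2 (history ring_protocol x)) \<longleftrightarrow> a \<noteq> msg1 ! (x 2 - 1)"
    "eq_out ring_protocol 3 (x 3) (received 3 (history ring_protocol x)) \<longleftrightarrow>
      b \<noteq> expect3 ! (x 3 - 1)"
    by (simp_all add: history_ring_protocol received_def Let_def a_def b_def)
      (simp_all add: ring_protocol_def)
  have nodes: "{1..3::nat} = {1, 2, 3}" by auto
  have "(\<forall>i\<in>{1..3}. \<forall>j\<in>{1..3}. x i = x j) \<longleftrightarrow> x 1 = x 2 \<and> x 2 = x 3"
    unfolding nodes by auto
  moreover have "(\<forall>i\<in>{1..3}. \<not> eq_out ring_protocol i (x i) (received i (history ring_protocol x)))
      \<longleftrightarrow> msg3 ! (x 3 - 1) ! b = expect1 ! (x 1 - 1) \<and> a = msg1 ! (x 2 - 1) \<and>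
        b = expect3 ! (x 3 - 1)"
    using outputs unfolding nodes by simp
  ultimately show "(\<forall>i\<in>{1..3}. \<not> eq_out ring_protocol i (x i) (received i (history ring_protocol x)))
      \<longleftrightarrow> (\<forall>i\<in>{1..3}. \<forall>j\<in>{1..3}. x i = x j)"
    using ring_protocol_table[rule_format, OF x] by (simp only: a_def b_def)
qed

lemma ring_protocol_sym_at:
  assumes "x \<in> inputs 3 6" "l < 3"
  shows "sym_at ring_protocol x l \<in> {0, 1, 2}"
proof -
  have six: "{1..6::nat} = {1, 2, 3, 4, 5, 6}" by auto
  have x: "x 1 \<in> {1..6}" "x 2 \<in> {1..6}" "x 3 \<in> {1..6}" using assms(1) by (auto simp: inputs_def)
  define a where "a = msg1 ! (x 1 - 1)"
  define b where "b = msg2 ! (x 2 - 1) ! a"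
  have a: "a \<in> {0, 1, 2}" using x(1) unfolding a_def six by (auto simp: msg1_def)
  have b: "b \<in> {0, 1, 2}" using x(2) a unfolding b_def six by (auto simp: msg2_def)
  have c: "msg3 ! (x 3 - 1) ! b \<in> {0, 1, 2}" using x(3) b unfolding six by (auto simp: msg3_def)
  have "sym_at ring_protocol x 0 = a" "sym_at ring_protocol x 1 = b"
    "sym_at ring_protocol x 2 = msg3 ! (x 3 - 1) ! b"
    by (simp_all add: sym_at_def history_ring_protocol Let_def a_def b_def)
  moreover have "l = 0 \<or> l = 1 \<or> l = 2" using assms(2) by auto
  ultimately show ?thesis using a b c by auto
qed

lemma complexity_ring_protocol: "complexity 3 6 ring_protocol = log 2 27"
proof -
  have len: "length (steps ring_protocol) = 3" by (simp add: ring_protocol_def)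
  have "card (alphabet 3 6 ring_protocol l) \<le> 3" if "l < 3" for l
  proof -
    have "alphabet 3 6 ring_protocol l \<subseteq> {0, 1, 2}"
      using ring_protocol_sym_at[OF _ that] unfolding alphabet_def by (rule image_subsetI)
    then have "card (alphabet 3 6 ring_protocol l) \<le> card {0, 1, 2 :: nat}"
      by (rule card_mono[rotated]) simp
    then show ?thesis by simp
  qed
  then have "capacity 3 6 ring_protocol {..<3} \<le> (\<Prod>l<3::nat. 3)"
    unfolding capacity_def by (intro prod_mono) auto
  then have "capacity 3 6 ring_protocol {..<3} = 27"
    using capacity_ge_27[OF ring_protocol_solves] len by simp
  then show ?thesis by (simp add: complexity_eq_log_capacity len)
qed

theorem mainTheorem8:
  shows "C_AD 3 6 = log 2 27"
  unfolding C_AD_def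
proof (rule cInf_eq_minimum)
  show "log 2 27 \<in> complexity 3 6 ` {P. solves_MEQ_AD 3 6 P}"
    using ring_protocol_solves complexity_ring_protocol by force
  show "log 2 27 \<le> y" if "y \<in> complexity 3 6 ` {P. solves_MEQ_AD 3 6 P}" for y
    using that complexity_ge_log_27 by blast
qed

end
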